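(* In the link-cut tree data structure of Sleator and Tarjan (implemented with splay trees over preferred paths), every operation (link, cut, and queries, all implemented via expose together with $O(1)$ splay-tree concatenate/split operations) takes $O(D^2)$ worst-case time, where $D$ is the diameter of the represented input tree (the maximum number of edges on a simple path).
   Context: The link-cut tree represents a dynamic forest by decomposing each tree into vertex-disjoint preferred paths, each stored in a splay tree keyed by depth; the expose operation makes the path from a vertex to its tree root preferred via a sequence of splice, concatenate and split operations on these splay trees. *)

theory Defs
  imports Main "HOL-Library.Tree"
begin

text \<open>A splay tree stores the vertices of one preferred path, in-order = increasing depth.
  Splaying is by position (the node itself), using zig / zig-zig / zig-zag rotations.\<close>

fun splay :: "'a \<Rightarrow> 'a tree \<Rightarrow> 'a tree" where
  "splay x Leaf = Leaf"
| "splay x (Node l b r) =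
    (if x = b then Node l b r
     else if x \<in> set_tree l then
       (case l of Leaf \<Rightarrow> Node l b r
        | Node ll c lr \<Rightarrow>
            if x = c then Node ll c (Node lr b r)
            else if x \<in> set_tree ll then
              (case splay x ll of Leaf \<Rightarrow> Node l b r
               | Node t1 a t2 \<Rightarrow> Node t1 a (Node t2 c (Node lr b r)))
            else
              (case splay x lr of Leaf \<Rightarrow> Node l b r
               | Node t1 a t2 \<Rightarrow> Node (Node ll c t1) a (Node t2 b r)))
     else if x \<in> set_tree r then
       (case r of Leaf \<Rightarrow> Node l b r
        | Node rl c rr \<Rightarrow>
            if x = c then Node (Node l b rl) c rr
            else if x \<in> set_tree rr then
              (case splay x rr of Leaf \<Rightarrow> Node l b r
               | Node t1 a t2 \<Rightarrow> Node (Node (Node l b rl) c t1) a t2)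
            else
              (case splay x rl of Leaf \<Rightarrow> Node l b r
               | Node t1 a t2 \<Rightarrow> Node (Node l b t1) a (Node t2 c rr)))
     else Node l b r)"

fun node_depth :: "'a \<Rightarrow> 'a tree \<Rightarrow> nat" where
  "node_depth x Leaf = 0"
| "node_depth x (Node l b r) =
    (if x = b then 0 else if x \<in> set_tree l then Suc (node_depth x l) else Suc (node_depth x r))"

text \<open>Cost of splaying x: one unit per rotation (= depth of x) plus one unit of overhead.\<close>
definition splay_cost :: "'a \<Rightarrow> 'a tree \<Rightarrow> nat" where
  "splay_cost x t = node_depth x t + 1"

definition head :: "'a tree \<Rightarrow> 'a" where
  "head t = hd (inorder t)"

text \<open>A state: a set of splay trees (one per preferred path) and path-parent pointers,
  where \<open>pp v\<close> is meaningful when v is the head (shallowest vertex) of its path.\<close>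
record 'a lct =
  trees :: "'a tree set"
  pp :: "'a \<Rightarrow> 'a option"

definition nodes :: "'a lct \<Rightarrow> 'a set" where
  "nodes s = (\<Union>t\<in>trees s. set_tree t)"

definition tree_of :: "'a lct \<Rightarrow> 'a \<Rightarrow> 'a tree" where
  "tree_of s v = (THE t. t \<in> trees s \<and> v \<in> set_tree t)"

fun pred_in :: "'a list \<Rightarrow> 'a \<Rightarrow> 'a option" where
  "pred_in (u # w # ys) v = (if w = v then Some u else pred_in (w # ys) v)"
| "pred_in _ v = None"

definition rep_parent :: "'a lct \<Rightarrow> 'a \<Rightarrow> 'a option" where
  "rep_parent s v =
     (if v \<notin> nodes s then None
      else (case pred_in (inorder (tree_of s v)) v of Some u \<Rightarrow> Some u | None \<Rightarrow> pp s v))"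

definition parent_rel :: "'a lct \<Rightarrow> ('a \<times> 'a) set" where
  "parent_rel s = {(p, v). rep_parent s v = Some p}"

definition lct_inv :: "'a lct \<Rightarrow> bool" where
  "lct_inv s \<longleftrightarrow>
     finite (trees s) \<and> Leaf \<notin> trees s \<and>
     (\<forall>t\<in>trees s. distinct (inorder t)) \<and>
     (\<forall>t1\<in>trees s. \<forall>t2\<in>trees s. t1 \<noteq> t2 \<longrightarrow> set_tree t1 \<inter> set_tree t2 = {}) \<and>
     (\<forall>t\<in>trees s. \<forall>w. pp s (head t) = Some w \<longrightarrow> w \<in> nodes s) \<and>
     wf (parent_rel s)"

definition adj :: "'a lct \<Rightarrow> 'a \<Rightarrow> 'a \<Rightarrow> bool" where
  "adj s u v \<longleftrightarrow> rep_parent s u = Some v \<or> rep_parent s v = Some u"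

definition diam_le :: "'a lct \<Rightarrow> nat \<Rightarrow> bool" where
  "diam_le s D \<longleftrightarrow>
     (\<forall>xs. xs \<noteq> [] \<and> distinct xs \<and> successively (adj s) xs \<longrightarrow> length xs - 1 \<le> D)"

definition expose_start :: "'a lct \<Rightarrow> 'a \<Rightarrow> 'a lct \<times> nat" where
  "expose_start s v =
     (let t = tree_of s v in
      case splay v t of
        Leaf \<Rightarrow> (s, splay_cost v t + 1)
      | Node L x R \<Rightarrow>
          (s\<lparr> trees := (trees s - {t}) \<union> {Node L x Leaf} \<union> (if R = Leaf then {} else {R}),
              pp := (if R = Leaf then pp s else (pp s)(head R := Some x)) \<rparr>,
           splay_cost v t + 1))"

inductive expose_loop :: "'a lct \<Rightarrow> 'a \<Rightarrow> 'a lct \<Rightarrow> nat \<Rightarrow> bool" where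
  loop_done: "tv = tree_of s v \<Longrightarrow> pp s (head tv) = None \<Longrightarrow>
         expose_loop s v (s\<lparr> trees := (trees s - {tv}) \<union> {splay v tv} \<rparr>) (splay_cost v tv)"
| loop_step: "tv = tree_of s v \<Longrightarrow> pp s (head tv) = Some w \<Longrightarrow> tw = tree_of s w \<Longrightarrow>
         splay w tw = Node L' x R' \<Longrightarrow>
         s2 = s\<lparr> trees := (trees s - {tv, tw}) \<union> {Node L' x tv} \<union> (if R' = Leaf then {} else {R'}),
                 pp := (if R' = Leaf then pp s else (pp s)(head R' := Some x)) \<rparr> \<Longrightarrow>
         expose_loop s2 v s' c \<Longrightarrow>
         expose_loop s v s' (c + splay_cost w tw + 1)"

definition expose :: "'a lct \<Rightarrow> 'a \<Rightarrow> 'a lct \<Rightarrow> nat \<Rightarrow> bool" where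
  "expose s v s' c \<longleftrightarrow>
     (\<exists>c2. expose_loop (fst (expose_start s v)) v s' c2 \<and> c = snd (expose_start s v) + c2)"

datatype 'a lct_op = Link 'a 'a | Cut 'a | FindRoot 'a

fun op_pre :: "'a lct \<Rightarrow> 'a lct_op \<Rightarrow> bool" where
  "op_pre s (Link v w) \<longleftrightarrow> v \<in> nodes s \<and> w \<in> nodes s \<and> rep_parent s v = None \<and>
                            (v, w) \<notin> (parent_rel s)\<^sup>*"
| "op_pre s (Cut v) \<longleftrightarrow> v \<in> nodes s \<and> rep_parent s v \<noteq> None"
| "op_pre s (FindRoot v) \<longleftrightarrow> v \<in> nodes s"

inductive lct_step :: "'a lct \<Rightarrow> 'a lct_op \<Rightarrow> 'a lct \<Rightarrow> 'a option \<Rightarrow> nat \<Rightarrow> bool" where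
  link: "expose s v s1 c1 \<Longrightarrow> expose s1 w s2 c2 \<Longrightarrow>
         tree_of s2 v = Node Leaf x Rv \<Longrightarrow>
         s3 = s2\<lparr> trees := (trees s2 - {tree_of s2 v, tree_of s2 w}) \<union> {Node (tree_of s2 w) x Rv} \<rparr> \<Longrightarrow>
         lct_step s (Link v w) s3 None (c1 + c2 + 1)"
| cut: "expose s v s1 c1 \<Longrightarrow> tree_of s1 v = Node L x R \<Longrightarrow>
        s2 = s1\<lparr> trees := (trees s1 - {tree_of s1 v}) \<union> {Node Leaf x R} \<union> (if L = Leaf then {} else {L}),
                 pp := (pp s1)(x := None) \<rparr> \<Longrightarrow>
        lct_step s (Cut v) s2 None (c1 + 1)"
| findroot: "expose s v s1 c1 \<Longrightarrow> tv = tree_of s1 v \<Longrightarrow> r = head tv \<Longrightarrow>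
        s2 = s1\<lparr> trees := (trees s1 - {tv}) \<union> {splay r tv} \<rparr> \<Longrightarrow>
        lct_step s (FindRoot v) s2 (Some r) (c1 + node_depth r tv + 1 + splay_cost r tv)"

end

theory Submission
  imports Defs
begin

text \<open>
  The forest represented by a state is determined by an edge set: the pairs of consecutive
  vertices of each preferred path, together with the path-parent edge of each path head.
  Re-splaying a tree, splitting a path after a vertex (the cut-off part becoming a path with
  a path-parent pointer to that vertex) and joining a path to the path that ends in its
  path-parent all leave this edge set unchanged. Every step of expose is one of these, so the
  represented forest, and with it the diameter bound D, is invariant. A preferred path is a
  simple path of the forest, so every splay tree has at most D + 1 nodes and every splay costs
  O(D). Each splice step of expose strictly enlarges the splay tree containing the exposed
  vertex, so there are at most D + 1 of them and expose costs O(D^2); link, cut and findroot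
  add at most one more expose and O(D) work.
\<close>

section \<open>Splaying\<close>

lemma splay_Node:
  "x \<in> set_tree t \<Longrightarrow> \<exists>l r. splay x t = Node l x r \<and> inorder l @ x # inorder r = inorder t"
proof (induction x t rule: splay.induct)
  case (2 x l b r)
  consider "x = b" | "x \<noteq> b" "x \<in> set_tree l" | "x \<noteq> b" "x \<notin> set_tree l" "x \<in> set_tree r"
    using "2.prems" by auto
  then show ?case
  proof cases
    case 2
    then obtain ll c lr where l: "l = Node ll c lr" by (cases l) auto
    consider "x = c" | "x \<noteq> c" "x \<in> set_tree ll" | "x \<noteq> c" "x \<notin> set_tree ll" "x \<in> set_tree lr"
      using 2 l by auto
    then show ?thesis
    proof cases
      case 2
      with "2.IH"(1) \<open>x \<noteq> b\<close> \<open>x \<in> set_tree l\<close> l show ?thesis by fastforce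
    next
      case 3
      with "2.IH"(2) \<open>x \<noteq> b\<close> \<open>x \<in> set_tree l\<close> l show ?thesis by fastforce
    qed (use 2 l in auto)
  next
    case 3
    then obtain rl c rr where r: "r = Node rl c rr" by (cases r) auto
    consider "x = c" | "x \<noteq> c" "x \<in> set_tree rr" | "x \<noteq> c" "x \<notin> set_tree rr" "x \<in> set_tree rl"
      using 3 r by auto
    then show ?thesis
    proof cases
      case 2
      with "2.IH"(3) \<open>x \<noteq> b\<close> \<open>x \<notin> set_tree l\<close> \<open>x \<in> set_tree r\<close> r show ?thesis by fastforce
    next
      case 3
      with "2.IH"(4) \<open>x \<noteq> b\<close> \<open>x \<notin> set_tree l\<close> \<open>x \<in> set_tree r\<close> r show ?thesis by fastforce
    qed (use 3 r in auto)
  qed auto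
qed simp

lemma splay_if_notin: "x \<notin> set_tree t \<Longrightarrow> splay x t = t"
  by (cases t) auto

lemma inorder_splay [simp]: "inorder (splay x t) = inorder t"
  using splay_Node[of x t] splay_if_notin[of x t] by (cases "x \<in> set_tree t") auto

lemma node_depth_le_size: "node_depth x t \<le> size t"
  by (induction t) auto

lemma head_in_set_tree: "t \<noteq> Leaf \<Longrightarrow> head t \<in> set_tree t"
  using hd_in_set[of "inorder t"] unfolding head_def by simp

section \<open>Edges of a path\<close>

fun path_edges :: "'a list \<Rightarrow> ('a \<times> 'a) set" where
  "path_edges (a # b # xs) = insert (a, b) (path_edges (b # xs))"
| "path_edges _ = {}"

lemma path_edges_append_Cons:
  "ys \<noteq> [] \<Longrightarrow> path_edges (xs @ x # ys) = path_edges (xs @ [x]) \<union> insert (x, hd ys) (path_edges ys)"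
  by (induction xs rule: path_edges.induct) (auto simp: neq_Nil_conv)

lemma path_edgesD: "(a, b) \<in> path_edges xs \<Longrightarrow> a \<in> set xs \<and> b \<in> set xs"
  by (induction xs rule: path_edges.induct) auto

lemma snd_in_set_if_path_edges_Cons: "(a, b) \<in> path_edges (x # xs) \<Longrightarrow> b \<in> set xs"
  by (induction xs arbitrary: x) auto

lemma successively_iff_path_edges: "successively P xs \<longleftrightarrow> (\<forall>(a, b) \<in> path_edges xs. P a b)"
  by (induction xs rule: path_edges.induct) auto

lemma hd_rtrancl_if_path_edges_subset:
  "path_edges xs \<subseteq> r \<Longrightarrow> y \<in> set xs \<Longrightarrow> (hd xs, y) \<in> r\<^sup>*"
  by (induction xs rule: path_edges.induct) (auto intro: converse_rtrancl_into_rtrancl)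

lemma pred_in_eq_None_if_notin_tl: "v \<notin> set (tl xs) \<Longrightarrow> pred_in xs v = None"
  by (induction xs v rule: pred_in.induct) auto

lemma pred_in_eq_Some_iff: "distinct xs \<Longrightarrow> pred_in xs v = Some u \<longleftrightarrow> (u, v) \<in> path_edges xs"
  by (induction xs v rule: pred_in.induct) (auto dest: snd_in_set_if_path_edges_Cons)

lemma pred_in_eq_None_iff: "distinct xs \<Longrightarrow> v \<in> set xs \<Longrightarrow> pred_in xs v = None \<longleftrightarrow> v = hd xs"
  by (induction xs v rule: pred_in.induct) (auto simp: pred_in_eq_None_if_notin_tl)

section \<open>The represented forest\<close>

definition pp_edges :: "('a \<Rightarrow> 'a option) \<Rightarrow> 'a \<Rightarrow> ('a \<times> 'a) set" where
  "pp_edges p h = {(u, h) | u. p h = Some u}"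

definition tree_edges :: "('a \<Rightarrow> 'a option) \<Rightarrow> 'a tree \<Rightarrow> ('a \<times> 'a) set" where
  "tree_edges p t = path_edges (inorder t) \<union> pp_edges p (head t)"

definition forest_edges :: "'a lct \<Rightarrow> ('a \<times> 'a) set" where
  "forest_edges s = (\<Union>t\<in>trees s. tree_edges (pp s) t)"

definition wf_paths :: "'a tree set \<Rightarrow> bool" where
  "wf_paths T \<longleftrightarrow> finite T \<and> Leaf \<notin> T \<and> (\<forall>t\<in>T. distinct (inorder t)) \<and>
     (\<forall>t1\<in>T. \<forall>t2\<in>T. t1 \<noteq> t2 \<longrightarrow> set_tree t1 \<inter> set_tree t2 = {})"

lemma wf_pathsD:
  assumes "wf_paths T" and "t \<in> T"
  shows "t \<noteq> Leaf" and "distinct (inorder t)"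
    and "\<And>t'. t' \<in> T \<Longrightarrow> t' \<noteq> t \<Longrightarrow> set_tree t \<inter> set_tree t' = {}"
  using assms unfolding wf_paths_def by auto

lemma wf_paths_trees: "lct_inv s \<Longrightarrow> wf_paths (trees s)"
  unfolding lct_inv_def wf_paths_def by blast

lemma tree_of_eq: "wf_paths (trees s) \<Longrightarrow> t \<in> trees s \<Longrightarrow> v \<in> set_tree t \<Longrightarrow> tree_of s v = t"
  unfolding tree_of_def wf_paths_def by (rule the_equality) blast+

lemma tree_of_mem:
  assumes "lct_inv s" and "v \<in> nodes s"
  shows "tree_of s v \<in> trees s" and "v \<in> set_tree (tree_of s v)"
  using assms tree_of_eq[OF wf_paths_trees[OF assms(1)]] unfolding nodes_def by fastforce+

lemma path_parent_in_nodes: "lct_inv s \<Longrightarrow> t \<in> trees s \<Longrightarrow> pp s (head t) = Some w \<Longrightarrow> w \<in> nodes s"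
  unfolding lct_inv_def by blast

lemma rep_parent_head:
  assumes wf: "wf_paths (trees s)" and t: "t \<in> trees s"
  shows "rep_parent s (head t) = pp s (head t)"
proof -
  have "t \<noteq> Leaf" "distinct (inorder t)" using wf_pathsD[OF wf t] by auto
  then have "head t \<in> set_tree t" "pred_in (inorder t) (head t) = None"
    using head_in_set_tree pred_in_eq_None_iff by (fastforce simp: head_def)+
  moreover from this(1) have "head t \<in> nodes s" using t unfolding nodes_def by blast
  ultimately show ?thesis using tree_of_eq[OF wf t] unfolding rep_parent_def by simp
qed

lemma rep_parent_eq_Some_iff:
  assumes wf: "wf_paths (trees s)"
  shows "rep_parent s v = Some u \<longleftrightarrow> (u, v) \<in> forest_edges s"
proof
  assume rp: "rep_parent s v = Some u"
  then have v: "v \<in> nodes s" unfolding rep_parent_def by (auto split: if_splits)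
  then obtain t where t: "t \<in> trees s" "v \<in> set_tree t" unfolding nodes_def by blast
  have tv: "tree_of s v = t" by (rule tree_of_eq[OF wf t])
  have dt: "distinct (inorder t)" by (rule wf_pathsD(2)[OF wf t(1)])
  show "(u, v) \<in> forest_edges s"
  proof (cases "pred_in (inorder t) v")
    case None
    then have "pp s v = Some u" "v = head t"
      using rp v t dt pred_in_eq_None_iff[of "inorder t" v] unfolding rep_parent_def tv head_def
      by auto
    then show ?thesis using t unfolding forest_edges_def tree_edges_def pp_edges_def by blast
  next
    case (Some a)
    moreover have "a = u" using Some rp v unfolding rep_parent_def tv by simp
    ultimately have "(u, v) \<in> path_edges (inorder t)" using pred_in_eq_Some_iff[OF dt] by simp
    then show ?thesis using t unfolding forest_edges_def tree_edges_def by blast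
  qed
next
  assume "(u, v) \<in> forest_edges s"
  then obtain t where t: "t \<in> trees s" and e: "(u, v) \<in> tree_edges (pp s) t"
    unfolding forest_edges_def by blast
  have dt: "distinct (inorder t)" by (rule wf_pathsD(2)[OF wf t])
  show "rep_parent s v = Some u"
  proof (cases "(u, v) \<in> path_edges (inorder t)")
    case True
    then have "v \<in> set_tree t" using path_edgesD[OF True] by simp
    moreover from this have "v \<in> nodes s" using t unfolding nodes_def by blast
    moreover have "pred_in (inorder t) v = Some u" using True pred_in_eq_Some_iff[OF dt] by blast
    ultimately show ?thesis using tree_of_eq[OF wf t] unfolding rep_parent_def by simp
  next
    case False
    then have "v = head t" "pp s (head t) = Some u"
      using e unfolding tree_edges_def pp_edges_def by auto
    then show ?thesis using rep_parent_head[OF wf t] by simp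
  qed
qed

lemma rep_parent_in_nodes:
  assumes inv: "lct_inv s" and rp: "rep_parent s v = Some u"
  shows "u \<in> nodes s"
proof -
  obtain t where t: "t \<in> trees s" and e: "(u, v) \<in> tree_edges (pp s) t"
    using rp rep_parent_eq_Some_iff[OF wf_paths_trees[OF inv]] unfolding forest_edges_def by blast
  show ?thesis
  proof (cases "(u, v) \<in> path_edges (inorder t)")
    case True
    then show ?thesis using t path_edgesD[OF True] unfolding nodes_def by auto
  next
    case False
    then have "pp s (head t) = Some u" using e unfolding tree_edges_def pp_edges_def by auto
    then show ?thesis by (rule path_parent_in_nodes[OF inv t])
  qed
qed

definition same_forest :: "'a lct \<Rightarrow> 'a lct \<Rightarrow> bool" where
  "same_forest s s' \<longleftrightarrow> lct_inv s' \<and> nodes s' = nodes s \<and> rep_parent s' = rep_parent s"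

lemma same_forestD:
  assumes "same_forest s s'"
  shows "lct_inv s'" and "nodes s' = nodes s" and "rep_parent s' = rep_parent s"
  using assms unfolding same_forest_def by simp_all

lemma same_forest_trans: "same_forest s s1 \<Longrightarrow> same_forest s1 s2 \<Longrightarrow> same_forest s s2"
  unfolding same_forest_def by simp

lemma same_forest_parent_rel: "same_forest s s' \<Longrightarrow> parent_rel s' = parent_rel s"
  unfolding same_forest_def parent_rel_def by simp

lemma same_forest_diam_le: "same_forest s s' \<Longrightarrow> diam_le s' D \<longleftrightarrow> diam_le s D"
  unfolding same_forest_def diam_le_def adj_def by simp

lemma same_forest_if_forest_edges_eq:
  assumes inv: "lct_inv s" and wf': "wf_paths (trees s')"
    and nodes': "nodes s' = nodes s" and edges': "forest_edges s' = forest_edges s"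
  shows "same_forest s s'"
proof -
  have rp: "rep_parent s' = rep_parent s"
  proof
    fix v show "rep_parent s' v = rep_parent s v"
      using rep_parent_eq_Some_iff[OF wf', of v]
        rep_parent_eq_Some_iff[OF wf_paths_trees[OF inv], of v]
      by (cases "rep_parent s' v"; cases "rep_parent s v") (auto simp: edges')
  qed
  have "w \<in> nodes s'" if "t \<in> trees s'" "pp s' (head t) = Some w" for t w
    using rep_parent_head[OF wf' that(1)] that(2) rp rep_parent_in_nodes[OF inv] nodes' by simp
  moreover have "wf (parent_rel s')" using inv rp unfolding lct_inv_def parent_rel_def by simp
  ultimately show ?thesis
    using wf' nodes' rp unfolding same_forest_def lct_inv_def wf_paths_def by blast
qed

lemma path_edges_subset_parent_rel:
  assumes wf: "wf_paths (trees s)" and t: "t \<in> trees s"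
  shows "path_edges (inorder t) \<subseteq> parent_rel s"
proof
  fix e assume "e \<in> path_edges (inorder t)"
  then have "e \<in> forest_edges s" using t unfolding forest_edges_def tree_edges_def by blast
  then show "e \<in> parent_rel s"
    using rep_parent_eq_Some_iff[OF wf] unfolding parent_rel_def by (cases e) simp
qed

lemma head_ancestor:
  "wf_paths (trees s) \<Longrightarrow> t \<in> trees s \<Longrightarrow> z \<in> set_tree t \<Longrightarrow> (head t, z) \<in> (parent_rel s)\<^sup>*"
  using hd_rtrancl_if_path_edges_subset[OF path_edges_subset_parent_rel] unfolding head_def by simp

lemma path_parent_ancestor:
  assumes inv: "lct_inv s" and t: "t \<in> trees s" and ppw: "pp s (head t) = Some w"
    and z: "z \<in> set_tree t"
  shows "(w, z) \<in> (parent_rel s)\<^sup>+"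
proof -
  have "(w, head t) \<in> parent_rel s"
    using rep_parent_head[OF wf_paths_trees[OF inv] t] ppw unfolding parent_rel_def by simp
  then show ?thesis using head_ancestor[OF wf_paths_trees[OF inv] t z] by simp
qed

lemma path_parent_notin_path:
  assumes "lct_inv s" and "t \<in> trees s" and "pp s (head t) = Some w"
  shows "w \<notin> set_tree t"
  using path_parent_ancestor[OF assms] wf_acyclic[of "parent_rel s"] assms(1)
  unfolding lct_inv_def acyclic_def by blast

lemma path_parent_tree:
  assumes inv: "lct_inv s" and v: "v \<in> nodes s" and ppw: "pp s (head (tree_of s v)) = Some w"
  shows "tree_of s w \<in> trees s" and "w \<in> set_tree (tree_of s w)"
    and "tree_of s w \<noteq> tree_of s v" and "(w, v) \<in> (parent_rel s)\<^sup>+"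
proof -
  note tv = tree_of_mem[OF inv v]
  show tw: "tree_of s w \<in> trees s" "w \<in> set_tree (tree_of s w)"
    using tree_of_mem[OF inv path_parent_in_nodes[OF inv tv(1) ppw]] by auto
  show "tree_of s w \<noteq> tree_of s v" using path_parent_notin_path[OF inv tv(1) ppw] tw(2) by auto
  show "(w, v) \<in> (parent_rel s)\<^sup>+" by (rule path_parent_ancestor[OF inv tv(1) ppw tv(2)])
qed

lemma size_path_le_diam:
  assumes inv: "lct_inv s" and D: "diam_le s D" and t: "t \<in> trees s"
  shows "size t \<le> D + 1"
proof -
  have wf: "wf_paths (trees s)" using inv by (rule wf_paths_trees)
  have "successively (adj s) (inorder t)"
    using path_edges_subset_parent_rel[OF wf t]
    unfolding successively_iff_path_edges adj_def parent_rel_def by blast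
  moreover have "inorder t \<noteq> []" "distinct (inorder t)" using wf_pathsD[OF wf t] by auto
  ultimately have "length (inorder t) - 1 \<le> D" using D unfolding diam_le_def by blast
  then show ?thesis by simp
qed

lemma splay_cost_le_diam:
  "lct_inv s \<Longrightarrow> diam_le s D \<Longrightarrow> t \<in> trees s \<Longrightarrow> splay_cost x t \<le> D + 2"
  using size_path_le_diam[of s D t] node_depth_le_size[of x t] unfolding splay_cost_def by simp

section \<open>Rearranging preferred paths\<close>

lemma wf_paths_replace:
  assumes T: "wf_paths T" and Os: "Os \<subseteq> T" and N: "wf_paths N"
    and nodes_N: "(\<Union>t\<in>N. set_tree t) = (\<Union>t\<in>Os. set_tree t)"
  shows "wf_paths (T - Os \<union> N)"
proof -
  note disj_T = wf_pathsD(3)[OF T] and disj_N = wf_pathsD(3)[OF N]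
  have disj_NT: "set_tree t1 \<inter> set_tree t2 = {}" if "t1 \<in> N" "t2 \<in> T - Os" for t1 t2
  proof -
    have "set_tree t1 \<subseteq> (\<Union>t\<in>Os. set_tree t)" using that(1) nodes_N by blast
    moreover have "set_tree t \<inter> set_tree t2 = {}" if "t \<in> Os" for t
      using disj_T Os that \<open>t2 \<in> T - Os\<close> by blast
    ultimately show ?thesis by blast
  qed
  have "set_tree t1 \<inter> set_tree t2 = {}"
    if t12: "t1 \<in> T - Os \<union> N" "t2 \<in> T - Os \<union> N" and ne: "t1 \<noteq> t2" for t1 t2
  proof -
    consider "t1 \<in> N" "t2 \<in> N" | "t1 \<in> N" "t2 \<in> T - Os" | "t1 \<in> T - Os" "t2 \<in> N"
      | "t1 \<in> T - Os" "t2 \<in> T - Os"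
      using t12 by blast
    then show ?thesis using ne disj_T disj_N disj_NT disj_NT[of t2 t1] by cases blast+
  qed
  moreover have "finite (T - Os \<union> N)" "Leaf \<notin> T - Os \<union> N" "\<forall>t \<in> T - Os \<union> N. distinct (inorder t)"
    using T N unfolding wf_paths_def by auto
  ultimately show ?thesis unfolding wf_paths_def by blast
qed

lemma same_forest_replace_trees:
  assumes inv: "lct_inv s" and Os: "Os \<subseteq> trees s" and trees': "trees s' = trees s - Os \<union> N"
    and N: "wf_paths N" and nodes_N: "(\<Union>t\<in>N. set_tree t) = (\<Union>t\<in>Os. set_tree t)"
    and pp': "\<And>h. pp s' h \<noteq> pp s h \<Longrightarrow> h \<in> (\<Union>t\<in>N. set_tree t)"
    and edges_N: "(\<Union>t\<in>N. tree_edges (pp s') t) = (\<Union>t\<in>Os. tree_edges (pp s) t)"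
  shows "same_forest s s'"
proof (rule same_forest_if_forest_edges_eq[OF inv])
  have wf: "wf_paths (trees s)" using inv by (rule wf_paths_trees)
  show "wf_paths (trees s')" unfolding trees' using wf_paths_replace[OF wf Os N nodes_N] .
  have trees_eq: "trees s = (trees s - Os) \<union> Os" using Os by blast
  show "nodes s' = nodes s"
    unfolding nodes_def trees' by (subst (2) trees_eq) (simp only: UN_Un nodes_N)
  have "tree_edges (pp s') t = tree_edges (pp s) t" if t: "t \<in> trees s - Os" for t
  proof -
    have "t \<in> trees s" "t \<notin> Os" using t by auto
    then have "head t \<notin> (\<Union>t'\<in>Os. set_tree t')"
      using wf_pathsD[OF wf] head_in_set_tree Os by blast
    then have "pp s' (head t) = pp s (head t)" using pp' nodes_N by blast
    then show ?thesis unfolding tree_edges_def pp_edges_def by simp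
  qed
  then show "forest_edges s' = forest_edges s"
    unfolding forest_edges_def trees' by (subst (2) trees_eq) (simp only: UN_Un edges_N cong: SUP_cong)
qed

lemma same_forest_replace_same_inorder:
  assumes inv: "lct_inv s" and t: "t \<in> trees s" and io: "inorder t' = inorder t"
  shows "same_forest s (s\<lparr>trees := trees s - {t} \<union> {t'}\<rparr>)"
proof (rule same_forest_replace_trees[OF inv, where Os = "{t}" and N = "{t'}"])
  show "wf_paths {t'}"
    using io wf_pathsD[OF wf_paths_trees[OF inv] t] unfolding wf_paths_def by auto
  show "(\<Union>u\<in>{t'}. set_tree u) = (\<Union>u\<in>{t}. set_tree u)"
    using io by (simp flip: set_inorder)
  show "(\<Union>u\<in>{t'}. tree_edges (pp (s\<lparr>trees := trees s - {t} \<union> {t'}\<rparr>)) u) =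
      (\<Union>u\<in>{t}. tree_edges (pp s) u)"
    using io unfolding tree_edges_def head_def by simp
qed (use t in auto)

definition split_path :: "'a lct \<Rightarrow> 'a tree \<Rightarrow> 'a tree \<Rightarrow> 'a \<Rightarrow> 'a tree \<Rightarrow> 'a lct" where
  "split_path s t L x R =
     s\<lparr>trees := (trees s - {t}) \<union> {Node L x Leaf} \<union> (if R = Leaf then {} else {R}),
       pp := (if R = Leaf then pp s else (pp s)(head R := Some x))\<rparr>"

definition join_paths :: "'a lct \<Rightarrow> 'a tree \<Rightarrow> 'a \<Rightarrow> 'a tree \<Rightarrow> 'a lct" where
  "join_paths s L x t = s\<lparr>trees := (trees s - {Node L x Leaf, t}) \<union> {Node L x t}\<rparr>"

lemma same_forest_split_path:
  assumes inv: "lct_inv s" and t: "t \<in> trees s" and io: "inorder t = inorder (Node L x R)"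
  shows "same_forest s (split_path s t L x R)"
proof (cases "R = Leaf")
  case True
  then show ?thesis
    using same_forest_replace_same_inorder[OF inv t, of "Node L x Leaf"] io
    by (simp add: split_path_def)
next
  case False
  let ?A = "inorder L" and ?B = "inorder R" and ?s' = "split_path s t L x R"
  have dt: "distinct (?A @ x # ?B)" using wf_pathsD(2)[OF wf_paths_trees[OF inv] t] io by simp
  have B: "?B \<noteq> []" using False by simp
  have head_t: "head t = hd (?A @ [x])" using io unfolding head_def by (simp add: hd_append)
  have head_R: "head R = hd ?B" unfolding head_def ..
  have "head t \<noteq> head R" using dt hd_in_set[OF B] unfolding head_t head_R by (cases ?A) auto
  then have edges_L:
      "tree_edges (pp ?s') (Node L x Leaf) = path_edges (?A @ [x]) \<union> pp_edges (pp s) (head t)"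
    using False head_t unfolding split_path_def tree_edges_def pp_edges_def head_def by simp
  have edges_R: "tree_edges (pp ?s') R = insert (x, hd ?B) (path_edges ?B)"
    using False head_R unfolding split_path_def tree_edges_def pp_edges_def by simp
  have edges_t: "tree_edges (pp s) t =
      path_edges (?A @ [x]) \<union> insert (x, hd ?B) (path_edges ?B) \<union> pp_edges (pp s) (head t)"
    using path_edges_append_Cons[OF B] io unfolding tree_edges_def by simp
  show ?thesis
  proof (rule same_forest_replace_trees[OF inv, where Os = "{t}" and N = "{Node L x Leaf, R}"])
    show "trees ?s' = trees s - {t} \<union> {Node L x Leaf, R}" using False by (auto simp: split_path_def)
    show "wf_paths {Node L x Leaf, R}" using dt False unfolding wf_paths_def by auto
    show "(\<Union>u\<in>{Node L x Leaf, R}. set_tree u) = (\<Union>u\<in>{t}. set_tree u)"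
      using io by (auto simp flip: set_inorder)
    show "h \<in> (\<Union>u\<in>{Node L x Leaf, R}. set_tree u)" if "pp ?s' h \<noteq> pp s h" for h
      using that head_in_set_tree[OF False] by (auto simp: split_path_def split: if_splits)
    show "(\<Union>u\<in>{Node L x Leaf, R}. tree_edges (pp ?s') u) = (\<Union>u\<in>{t}. tree_edges (pp s) u)"
      using edges_L edges_R edges_t by auto
  qed (use t in auto)
qed

lemma same_forest_join_paths:
  assumes inv: "lct_inv s" and l: "Node L x Leaf \<in> trees s" and t: "t \<in> trees s"
    and ppx: "pp s (head t) = Some x"
  shows "same_forest s (join_paths s L x t)"
proof -
  let ?A = "inorder L" and ?C = "inorder t"
  have wf: "wf_paths (trees s)" using inv by (rule wf_paths_trees)
  have ne: "t \<noteq> Node L x Leaf" using path_parent_notin_path[OF inv t ppx] by auto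
  have disj: "set (?A @ [x]) \<inter> set ?C = {}" using wf_pathsD(3)[OF wf l t ne] by simp
  have dA: "distinct (?A @ [x])" and dC: "distinct ?C" and C: "?C \<noteq> []"
    using wf_pathsD[OF wf l] wf_pathsD[OF wf t] by auto
  have edges:
      "tree_edges (pp s) (Node L x t) = tree_edges (pp s) (Node L x Leaf) \<union> tree_edges (pp s) t"
    using path_edges_append_Cons[OF C] ppx unfolding tree_edges_def pp_edges_def head_def
    by (auto simp: hd_append)
  show ?thesis
  proof (rule same_forest_replace_trees[OF inv, where Os = "{Node L x Leaf, t}"
        and N = "{Node L x t}"])
    show "wf_paths {Node L x t}" using dA dC disj unfolding wf_paths_def by auto
  qed (use l t edges in \<open>auto simp: join_paths_def\<close>)
qed

lemma splice_eq_join_split: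
  assumes wf: "wf_paths (trees s)" and tv: "tv \<in> trees s" and tw: "tw \<in> trees s"
    and ne: "tv \<noteq> tw" and io: "inorder tw = inorder (Node L x R)"
  shows "s\<lparr>trees := (trees s - {tv, tw}) \<union> {Node L x tv} \<union> (if R = Leaf then {} else {R}),
            pp := (if R = Leaf then pp s else (pp s)(head R := Some x))\<rparr> =
         join_paths (split_path s tw L x R) L x tv"
proof -
  have set_tw: "set_tree tw = set_tree L \<union> {x} \<union> set_tree R" using io by (simp flip: set_inorder)
  have "x \<notin> set_tree R" using wf_pathsD(2)[OF wf tw] io by (simp flip: set_inorder)
  moreover have "Node L x Leaf \<notin> trees s - {tw}"
    using wf_pathsD(3)[OF wf tw, of "Node L x Leaf"] set_tw by auto
  moreover have "R \<noteq> tv" using wf_pathsD(3)[OF wf tw tv ne] wf_pathsD(1)[OF wf tv] set_tw by auto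
  ultimately have "trees s - {tw} \<union> {Node L x Leaf} \<union> (if R = Leaf then {} else {R})
      - {Node L x Leaf, tv} \<union> {Node L x tv} =
    trees s - {tv, tw} \<union> {Node L x tv} \<union> (if R = Leaf then {} else {R})"
    by auto
  then show ?thesis unfolding join_paths_def split_path_def by simp
qed

section \<open>Expose\<close>

lemma expose_loop_step:
  assumes inv: "lct_inv s" and v: "v \<in> nodes s" and tv: "tv = tree_of s v"
    and ppw: "pp s (head tv) = Some w" and tw: "tw = tree_of s w" and sp: "splay w tw = Node L x R"
    and s2: "s2 = s\<lparr>trees := (trees s - {tv, tw}) \<union> {Node L x tv} \<union> (if R = Leaf then {} else {R}),
                    pp := (if R = Leaf then pp s else (pp s)(head R := Some x))\<rparr>"
  shows "same_forest s s2" and "tree_of s2 v = Node L x tv" and "trees s - {tv, tw} \<subseteq> trees s2"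
proof -
  have wf: "wf_paths (trees s)" using inv by (rule wf_paths_trees)
  have tv_in: "tv \<in> trees s" "v \<in> set_tree tv" using tree_of_mem[OF inv v] tv by auto
  have tw_in: "tw \<in> trees s" "w \<in> set_tree tw" "tw \<noteq> tv"
    using path_parent_tree(1-3)[OF inv v] ppw tv tw by simp_all
  have x: "x = w" and io: "inorder tw = inorder (Node L x R)"
    using splay_Node[OF tw_in(2)] sp by auto
  let ?s1 = "split_path s tw L x R"
  have s1: "same_forest s ?s1" by (rule same_forest_split_path[OF inv tw_in(1) io])
  have "head tv \<notin> set_tree R"
    using wf_pathsD(3)[OF wf tw_in(1) tv_in(1)] tw_in(3) io
      head_in_set_tree[OF wf_pathsD(1)[OF wf tv_in(1)]]
    by (auto simp flip: set_inorder)
  then have "pp ?s1 (head tv) = Some x"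
    using ppw x head_in_set_tree[of R] by (auto simp: split_path_def)
  moreover have "Node L x Leaf \<in> trees ?s1" "tv \<in> trees ?s1"
    using tv_in(1) tw_in(3) by (auto simp: split_path_def)
  moreover have "s2 = join_paths ?s1 L x tv"
    using splice_eq_join_split[OF wf tv_in(1) tw_in(1) tw_in(3)[symmetric] io] s2 by simp
  ultimately show s2_same: "same_forest s s2"
    using same_forest_trans[OF s1 same_forest_join_paths[OF same_forestD(1)[OF s1]]] by simp
  have "Node L x tv \<in> trees s2" using s2 by simp
  then show "tree_of s2 v = Node L x tv"
    using tree_of_eq[OF wf_paths_trees[OF same_forestD(1)[OF s2_same]]] tv_in(2) by simp
  show "trees s - {tv, tw} \<subseteq> trees s2" using s2 by auto
qed

lemma expose_loop_same_forest:
  "expose_loop s v s' c \<Longrightarrow> lct_inv s \<Longrightarrow> v \<in> nodes s \<Longrightarrow> same_forest s s'"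
proof (induction rule: expose_loop.induct)
  case (loop_done tv s v)
  have "tv \<in> trees s"
    using tree_of_mem(1)[OF loop_done.prems(1,2)] loop_done.hyps(1) by simp
  then show ?case using same_forest_replace_same_inorder[OF loop_done.prems(1)] by simp
next
  case (loop_step tv s v w tw L x R s2 s' c)
  have s2: "same_forest s s2" using expose_loop_step(1)[OF loop_step.prems loop_step.hyps(1-5)] .
  then have "same_forest s2 s'"
    using loop_step.IH loop_step.prems(2) unfolding same_forest_def by simp
  then show ?case using same_forest_trans[OF s2] by blast
qed

lemma expose_loop_cost:
  "expose_loop s v s' c \<Longrightarrow> lct_inv s \<Longrightarrow> diam_le s D \<Longrightarrow> v \<in> nodes s \<Longrightarrow>
   c \<le> (D + 3) * (D + 2 - size (tree_of s v))"
proof (induction rule: expose_loop.induct)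
  case (loop_done tv s v)
  have tv: "tv \<in> trees s"
    using tree_of_mem(1)[OF loop_done.prems(1,3)] loop_done.hyps(1) by simp
  have "1 \<le> D + 2 - size tv" using size_path_le_diam[OF loop_done.prems(1,2) tv] by simp
  then have "D + 3 \<le> (D + 3) * (D + 2 - size tv)" using mult_le_mono2[of 1 _ "D + 3"] by simp
  then show ?case
    unfolding loop_done.hyps(1)[symmetric]
    using splay_cost_le_diam[OF loop_done.prems(1,2) tv, of v] by linarith
next
  case (loop_step tv s v w tw L x R s2 s' c)
  note step = expose_loop_step[OF loop_step.prems(1,3) loop_step.hyps(1-5)]
  have inv2: "lct_inv s2" and v2: "v \<in> nodes s2" and D2: "diam_le s2 D"
    using step(1) loop_step.prems same_forest_diam_le unfolding same_forest_def by auto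
  have "tree_of s2 v \<in> trees s2" using tree_of_mem(1)[OF inv2 v2] .
  then have "size (Node L x tv) \<le> D + 1" using size_path_le_diam[OF inv2 D2] step(2) by metis
  define k where "k = D + 2 - size (Node L x tv)"
  have "c \<le> (D + 3) * k" using loop_step.IH[OF inv2 D2 v2] unfolding step(2) k_def .
  moreover have "splay_cost w tw \<le> D + 2"
    using splay_cost_le_diam[OF loop_step.prems(1,2)] path_parent_tree(1)[OF loop_step.prems(1,3)]
      loop_step.hyps(1-3) by simp
  ultimately have "c + splay_cost w tw + 1 \<le> (D + 3) * (k + 1)" by simp
  also have "\<dots> \<le> (D + 3) * (D + 2 - size tv)"
    using \<open>size (Node L x tv) \<le> D + 1\<close> unfolding k_def by (intro mult_le_mono2) simp
  finally show ?case unfolding loop_step.hyps(1) .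
qed

lemma expose_loop_exists:
  "lct_inv s \<Longrightarrow> diam_le s D \<Longrightarrow> v \<in> nodes s \<Longrightarrow> \<exists>s' c. expose_loop s v s' c"
proof (induction "D + 1 - size (tree_of s v)" arbitrary: s rule: less_induct)
  case less
  define tv where "tv = tree_of s v"
  show ?case
  proof (cases "pp s (head tv)")
    case None
    then show ?thesis using expose_loop.loop_done[OF tv_def] by blast
  next
    case (Some w)
    define tw where "tw = tree_of s w"
    have "w \<in> set_tree tw" using path_parent_tree(2)[OF less.prems(1,3)] Some tv_def tw_def by simp
    then obtain L R where sp: "splay w tw = Node L w R" using splay_Node[of w tw] by blast
    define s2 where "s2 =
      s\<lparr>trees := (trees s - {tv, tw}) \<union> {Node L w tv} \<union> (if R = Leaf then {} else {R}),
        pp := (if R = Leaf then pp s else (pp s)(head R := Some w))\<rparr>"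
    note step = expose_loop_step[OF less.prems(1,3) tv_def Some tw_def sp s2_def]
    have inv2: "lct_inv s2" and v2: "v \<in> nodes s2" and D2: "diam_le s2 D"
      using step(1) less.prems same_forest_diam_le unfolding same_forest_def by auto
    have "tree_of s2 v \<in> trees s2" using tree_of_mem(1)[OF inv2 v2] .
    then have "size (tree_of s2 v) \<le> D + 1" by (rule size_path_le_diam[OF inv2 D2])
    then have "D + 1 - size (tree_of s2 v) < D + 1 - size (tree_of s v)"
      unfolding step(2) tv_def by simp
    then obtain s' c where "expose_loop s2 v s' c" using less.hyps[OF _ inv2 D2 v2] by blast
    then show ?thesis using expose_loop.loop_step[OF tv_def Some tw_def sp s2_def] by blast
  qed
qed

lemma expose_loop_keeps_tree:
  "expose_loop s v s' c \<Longrightarrow> lct_inv s \<Longrightarrow> v \<in> nodes s \<Longrightarrow> T \<in> trees s \<Longrightarrow>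
   (\<forall>y\<in>set_tree T. (y, v) \<notin> (parent_rel s)\<^sup>*) \<Longrightarrow> T \<in> trees s'"
proof (induction rule: expose_loop.induct)
  case (loop_done tv s v)
  have "v \<in> set_tree tv"
    using tree_of_mem(2)[OF loop_done.prems(1,2)] loop_done.hyps(1) by simp
  then have "T \<noteq> tv" using loop_done.prems(4) by auto
  then show ?case using loop_done.prems(3) by simp
next
  case (loop_step tv s v w tw L x R s2 s' c)
  note step = expose_loop_step[OF loop_step.prems(1,2) loop_step.hyps(1-5)]
  have "v \<in> set_tree tv"
    using tree_of_mem(2)[OF loop_step.prems(1,2)] loop_step.hyps(1) by simp
  moreover have "w \<in> set_tree tw" and "(w, v) \<in> (parent_rel s)\<^sup>*"
    using path_parent_tree(2,4)[OF loop_step.prems(1,2)] loop_step.hyps(1-3) by auto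
  ultimately have "T \<noteq> tv" "T \<noteq> tw" using loop_step.prems(4) by auto
  then have "T \<in> trees s2" using step(3) loop_step.prems(3) by blast
  moreover have "parent_rel s2 = parent_rel s" by (rule same_forest_parent_rel[OF step(1)])
  moreover have "lct_inv s2" "v \<in> nodes s2"
    using step(1) loop_step.prems(2) unfolding same_forest_def by auto
  ultimately show ?case using loop_step.IH loop_step.prems(4) by simp
qed

lemma expose_iff_loop:
  assumes "splay v (tree_of s v) = Node L x R"
  shows "expose s v s' c \<longleftrightarrow>
    (\<exists>c'. expose_loop (split_path s (tree_of s v) L x R) v s' c' \<and>
       c = splay_cost v (tree_of s v) + 1 + c')"
  using assms unfolding expose_def expose_start_def split_path_def Let_def by simp

lemma splay_split_same_forest:
  assumes inv: "lct_inv s" and v: "v \<in> nodes s"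
  obtains L R where "splay v (tree_of s v) = Node L v R"
    and "same_forest s (split_path s (tree_of s v) L v R)"
proof -
  obtain L R where "splay v (tree_of s v) = Node L v R"
    and "inorder (tree_of s v) = inorder (Node L v R)"
    using splay_Node[OF tree_of_mem(2)[OF inv v]] by auto
  with same_forest_split_path[OF inv tree_of_mem(1)[OF inv v]] that show thesis by blast
qed

lemma expose_same_forest:
  assumes e: "expose s v s' c" and inv: "lct_inv s" and v: "v \<in> nodes s"
  shows "same_forest s s'"
proof -
  obtain L R where sp: "splay v (tree_of s v) = Node L v R"
    and s1: "same_forest s (split_path s (tree_of s v) L v R)" (is "same_forest s ?s1")
    using splay_split_same_forest[OF inv v] .
  obtain c' where loop: "expose_loop ?s1 v s' c'" using e unfolding expose_iff_loop[OF sp] by blast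
  have "v \<in> nodes ?s1" using same_forestD(2)[OF s1] v by simp
  then show ?thesis
    by (rule same_forest_trans[OF s1 expose_loop_same_forest[OF loop same_forestD(1)[OF s1]]])
qed

lemma expose_cost:
  assumes e: "expose s v s' c" and inv: "lct_inv s" and D: "diam_le s D" and v: "v \<in> nodes s"
  shows "c \<le> (D + 2) * (D + 3)"
proof -
  obtain L R where sp: "splay v (tree_of s v) = Node L v R"
    and s1: "same_forest s (split_path s (tree_of s v) L v R)" (is "same_forest s ?s1")
    using splay_split_same_forest[OF inv v] .
  obtain c' where loop: "expose_loop ?s1 v s' c'" and c: "c = splay_cost v (tree_of s v) + 1 + c'"
    using e unfolding expose_iff_loop[OF sp] by blast
  have inv1: "lct_inv ?s1" by (rule same_forestD(1)[OF s1])
  have v1: "v \<in> nodes ?s1" using same_forestD(2)[OF s1] v by simp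
  have D1: "diam_le ?s1 D" using same_forest_diam_le[OF s1] D by simp
  have "tree_of ?s1 v \<noteq> Leaf" using tree_of_mem(2)[OF inv1 v1] by auto
  then have "D + 2 - size (tree_of ?s1 v) \<le> D + 1" by (cases "tree_of ?s1 v") auto
  then have "c' \<le> (D + 3) * (D + 1)"
    using expose_loop_cost[OF loop inv1 D1 v1] mult_le_mono2 order_trans by blast
  moreover have "splay_cost v (tree_of s v) \<le> D + 2"
    using splay_cost_le_diam[OF inv D tree_of_mem(1)[OF inv v]] .
  moreover have "(D + 2) * (D + 3) = (D + 2) + 1 + (D + 3) * (D + 1)" by (simp add: algebra_simps)
  ultimately show ?thesis using c by linarith
qed

lemma expose_exists:
  assumes inv: "lct_inv s" and D: "diam_le s D" and v: "v \<in> nodes s"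
  shows "\<exists>s' c. expose s v s' c"
proof -
  obtain L R where sp: "splay v (tree_of s v) = Node L v R"
    and s1: "same_forest s (split_path s (tree_of s v) L v R)" (is "same_forest s ?s1")
    using splay_split_same_forest[OF inv v] .
  have "v \<in> nodes ?s1" using same_forestD(2)[OF s1] v by simp
  moreover have "diam_le ?s1 D" using same_forest_diam_le[OF s1] D by simp
  ultimately obtain s' c' where "expose_loop ?s1 v s' c'"
    using expose_loop_exists[OF same_forestD(1)[OF s1]] by blast
  then show ?thesis unfolding expose_iff_loop[OF sp] by blast
qed

lemma expose_keeps_tree:
  assumes e: "expose s v s' c" and inv: "lct_inv s" and v: "v \<in> nodes s" and T: "T \<in> trees s"
    and unrelated: "\<forall>y\<in>set_tree T. (y, v) \<notin> (parent_rel s)\<^sup>*"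
  shows "T \<in> trees s'"
proof -
  obtain L R where sp: "splay v (tree_of s v) = Node L v R"
    and s1: "same_forest s (split_path s (tree_of s v) L v R)" (is "same_forest s ?s1")
    using splay_split_same_forest[OF inv v] .
  obtain c' where loop: "expose_loop ?s1 v s' c'" using e unfolding expose_iff_loop[OF sp] by blast
  have "T \<noteq> tree_of s v" using unrelated tree_of_mem(2)[OF inv v] by auto
  then have "T \<in> trees ?s1" using T by (simp add: split_path_def)
  moreover have "v \<in> nodes ?s1" using same_forestD(2)[OF s1] v by simp
  ultimately show ?thesis
    using expose_loop_keeps_tree[OF loop same_forestD(1)[OF s1]] unrelated
      same_forest_parent_rel[OF s1]
    by simp
qed

lemma expose_isolates_root:
  assumes e: "expose s v s' c" and inv: "lct_inv s" and v: "v \<in> nodes s"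
    and root: "rep_parent s v = None"
  shows "Node Leaf v Leaf \<in> trees s'"
proof -
  have wf: "wf_paths (trees s)" using inv by (rule wf_paths_trees)
  let ?t = "tree_of s v"
  have t: "?t \<in> trees s" "v \<in> set_tree ?t" using tree_of_mem[OF inv v] by auto
  have "pred_in (inorder ?t) v = None"
    using root v unfolding rep_parent_def by (auto split: option.splits)
  then have hd: "hd (inorder ?t) = v"
    using pred_in_eq_None_iff[OF wf_pathsD(2)[OF wf t(1)]] t(2) by simp
  obtain L R where sp: "splay v ?t = Node L v R"
    and s1: "same_forest s (split_path s ?t L v R)" (is "same_forest s ?s1")
    using splay_split_same_forest[OF inv v] .
  have "inorder ?t = inorder L @ v # inorder R" using inorder_splay[of v ?t] sp by simp
  then have "L = Leaf" using hd wf_pathsD(2)[OF wf t(1)] by (cases "inorder L") auto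
  then have T1: "Node Leaf v Leaf \<in> trees ?s1" by (simp add: split_path_def)
  have inv1: "lct_inv ?s1" by (rule same_forestD(1)[OF s1])
  have tree_of1: "tree_of ?s1 v = Node Leaf v Leaf"
    using tree_of_eq[OF wf_paths_trees[OF inv1] T1] by simp
  have "pp ?s1 v = None"
    using rep_parent_head[OF wf_paths_trees[OF inv1] T1] same_forestD(3)[OF s1] root
    by (simp add: head_def)
  obtain c' where "expose_loop ?s1 v s' c'" using e unfolding expose_iff_loop[OF sp] by blast
  then show ?thesis
  proof cases
    case (loop_done tv)
    then show ?thesis using tree_of1 by simp
  next
    case (loop_step tv w)
    then show ?thesis using tree_of1 \<open>pp ?s1 v = None\<close> by (simp add: head_def)
  qed
qed

section \<open>Link-cut tree operations\<close>

lemma lct_step_exists: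
  assumes inv: "lct_inv s" and pre: "op_pre s op" and D: "diam_le s D"
  shows "\<exists>s' r c. lct_step s op s' r c"
proof (cases op)
  case (Link v w)
  then have v: "v \<in> nodes s" and w: "w \<in> nodes s" and root: "rep_parent s v = None"
    and unrelated: "(v, w) \<notin> (parent_rel s)\<^sup>*" using pre by auto
  obtain s1 c1 where e1: "expose s v s1 c1" using expose_exists[OF inv D v] by blast
  have s1: "same_forest s s1" by (rule expose_same_forest[OF e1 inv v])
  have inv1: "lct_inv s1" and w1: "w \<in> nodes s1" and D1: "diam_le s1 D"
    using same_forestD[OF s1] w D same_forest_diam_le[OF s1] by auto
  obtain s2 c2 where e2: "expose s1 w s2 c2" using expose_exists[OF inv1 D1 w1] by blast
  have "Node Leaf v Leaf \<in> trees s2"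
    using expose_keeps_tree[OF e2 inv1 w1 expose_isolates_root[OF e1 inv v root]] unrelated
      same_forest_parent_rel[OF s1] by simp
  then have "tree_of s2 v = Node Leaf v Leaf"
    using tree_of_eq[OF wf_paths_trees[OF same_forestD(1)[OF expose_same_forest[OF e2 inv1 w1]]]]
    by simp
  then show ?thesis using lct_step.link[OF e1 e2] Link by blast
next
  case (Cut v)
  then have v: "v \<in> nodes s" using pre by simp
  obtain s1 c1 where e1: "expose s v s1 c1" using expose_exists[OF inv D v] by blast
  have s1: "same_forest s s1" by (rule expose_same_forest[OF e1 inv v])
  have "v \<in> set_tree (tree_of s1 v)"
    using tree_of_mem(2)[OF same_forestD(1)[OF s1]] same_forestD(2)[OF s1] v by simp
  then obtain L x R where "tree_of s1 v = Node L x R" by (cases "tree_of s1 v") auto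
  then show ?thesis using lct_step.cut[OF e1] Cut by blast
next
  case (FindRoot v)
  then have v: "v \<in> nodes s" using pre by simp
  obtain s1 c1 where e1: "expose s v s1 c1" using expose_exists[OF inv D v] by blast
  then show ?thesis using lct_step.findroot[OF e1 refl refl refl] FindRoot by blast
qed

lemma lct_step_cost:
  assumes inv: "lct_inv s" and pre: "op_pre s op" and D: "diam_le s D"
    and step: "lct_step s op s' r c"
  shows "c \<le> 13 * (D + 1)^2"
proof -
  have sq: "(D + 2) * (D + 3) \<le> 6 * (D + 1)^2" by (simp add: power2_eq_square algebra_simps)
  have one_le: "1 \<le> (D + 1)^2" and lin: "D + 1 \<le> (D + 1)^2" by (simp_all add: power2_eq_square)
  from step show ?thesis
  proof cases
    case (link v s1 c1 w s2 c2)
    then have e1: "expose s v s1 c1" and e2: "expose s1 w s2 c2" and c: "c = c1 + c2 + 1"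
      and v: "v \<in> nodes s" and w: "w \<in> nodes s" using pre by simp_all
    have s1: "same_forest s s1" by (rule expose_same_forest[OF e1 inv v])
    have "c2 \<le> (D + 2) * (D + 3)"
      using expose_cost[OF e2 same_forestD(1)[OF s1]] same_forest_diam_le[OF s1] D
        same_forestD(2)[OF s1] w
      by simp
    then show ?thesis using expose_cost[OF e1 inv D v] c sq one_le by linarith
  next
    case (cut v s1 c1)
    then have "expose s v s1 c1" and "c = c1 + 1" and "v \<in> nodes s" using pre by simp_all
    then show ?thesis using expose_cost[OF _ inv D] sq one_le by fastforce
  next
    case (findroot v s1 c1 tv)
    then have e1: "expose s v s1 c1" and tv: "tv = tree_of s1 v"
      and c: "c = c1 + node_depth (head tv) tv + 1 + splay_cost (head tv) tv"
      and v: "v \<in> nodes s" using pre by simp_all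
    have s1: "same_forest s s1" by (rule expose_same_forest[OF e1 inv v])
    have inv1: "lct_inv s1" and D1: "diam_le s1 D"
      using same_forestD(1)[OF s1] same_forest_diam_le[OF s1] D by simp_all
    have "tv \<in> trees s1" using tree_of_mem(1)[OF inv1] same_forestD(2)[OF s1] v tv by simp
    then have "node_depth (head tv) tv \<le> D + 1" and "splay_cost (head tv) tv \<le> D + 2"
      using size_path_le_diam[OF inv1 D1] splay_cost_le_diam[OF inv1 D1]
        node_depth_le_size[of "head tv" tv]
      by fastforce+
    then show ?thesis using expose_cost[OF e1 inv D v] c sq one_le lin by linarith
  qed
qed

theorem theoremB1:
  shows "\<exists>K::nat. \<forall>(s::'a lct) op D.
           lct_inv s \<and> op_pre s op \<and> diam_le s D \<longrightarrow>
             (\<exists>s' r c. lct_step s op s' r c) \<and>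
             (\<forall>s' r c. lct_step s op s' r c \<longrightarrow> c \<le> K * (D + 1)^2)"
  using lct_step_exists lct_step_cost by (intro exI[of _ 13]) blast

end
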